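(* For $k\geq2$ and $d\geq3$, $R_{d,\dots,d}(W_d^{\otimes k})\leq 2^{k-1}kd$, where $W_d^{\otimes k}\in S^d\mathbb{C}^2\otimes\cdots\otimes S^d\mathbb{C}^2$ ($k$ factors).
   Context: Identify $S^d\mathbb{C}^2$ with binary forms of degree $d$ in a basis $\{x,y\}$; $W_d=x^{d-1}y$. The partially symmetric rank $R_{d_1,\dots,d_k}(T)$ is the minimal $r$ such that $T=\sum_{i=1}^r v_{i,1}^{\otimes d_1}\otimes\cdots\otimes v_{i,k}^{\otimes d_k}$ with $v_{i,j}\in\mathbb{C}^2$. *)

theory Defs
  imports Complex_Main
begin

text \<open>An element of S^{d_1}C^2 \<otimes> ... \<otimes> S^{d_k}C^2 is identified with a
multihomogeneous form in k pairs of variables (x_j, y_j), j < k, of multidegree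
(d_1,...,d_k); over the infinite field C such a form is determined by its polynomial
function, which is what we use. The vector v = (a,b) in C^2 corresponds to the linear
form a x + b y, so v^{\<otimes> d} corresponds to (a x + b y)^d.\<close>

type_synonym ptensor = "(nat \<Rightarrow> complex) \<Rightarrow> (nat \<Rightarrow> complex) \<Rightarrow> complex"

definition ps_rank :: "nat \<Rightarrow> (nat \<Rightarrow> nat) \<Rightarrow> ptensor \<Rightarrow> nat" where
  "ps_rank k ds T = (LEAST r. \<exists>a b :: nat \<Rightarrow> nat \<Rightarrow> complex.
      \<forall>x y. T x y = (\<Sum>i<r. \<Prod>j<k. (a i j * x j + b i j * y j) ^ ds j))"

definition W_pow :: "nat \<Rightarrow> nat \<Rightarrow> ptensor" where
  "W_pow k d = (\<lambda>x y. \<Prod>j<k. x j ^ (d - 1) * y j)"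

end

theory Submission
  imports Defs "HOL-Computational_Algebra.Polynomial"
begin

text \<open>Fix the variables and put P_j(t) = (x_j + t y_j)^d. The coefficient of t in P_j is
d x_j^{d-1} y_j, so in q(t) = P_0(t) \<Prod>_{0<j<k} (P_j(t) - P_j(-t)) the coefficient of t^k is a
nonzero multiple of W_d^{\<otimes>k}: each difference is an odd polynomial without constant term.
Since deg q \<le> kd, this coefficient is extracted by averaging t^{kd-k} q(t) over the kd-th roots
of unity t = \<omega>^i. Expanding the product of differences gives 2^{k-1} signed products of d-th
powers of linear forms for each i, hence a decomposition of length 2^{k-1} k d.\<close>

lemma ex_complex_nth_root:
  fixes c :: complex
  assumes "n > 0"
  shows "\<exists>r. r ^ n = c"
proof (cases "c = 0")
  case True
  then show ?thesis using assms by (intro exI[of _ 0]) simp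
next
  case False
  have "(1::complex) \<in> {z. z ^ n = 1}" by simp
  then show ?thesis
    using bij_betw_imp_surj_on[OF bij_betw_nth_root_unity[OF False assms]] by blast
qed

lemma ps_rank_le_card:
  fixes T :: ptensor and E :: "'e set"
  assumes "0 < k" and "0 < ds 0" and "finite E"
    and T: "\<And>x y. T x y = (\<Sum>e\<in>E. c e * (\<Prod>j<k. (A e j * x j + B e j * y j) ^ ds j))"
  shows "ps_rank k ds T \<le> card E"
proof -
  obtain h where h: "bij_betw h {..<card E} E"
    using ex_bij_betw_nat_finite[OF \<open>finite E\<close>] by (auto simp: atLeast0LessThan)
  have "\<forall>e. \<exists>z. z ^ ds 0 = c e"
    using ex_complex_nth_root[OF \<open>0 < ds 0\<close>] by blast
  then obtain r where r: "\<And>e. r e ^ ds 0 = c e"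
    by (metis choice)
  obtain k' where k': "k = Suc k'" using \<open>0 < k\<close> gr0_implies_Suc by blast
  define a where "a i j = (if j = 0 then r (h i) else 1) * A (h i) j" for i j
  define b where "b i j = (if j = 0 then r (h i) else 1) * B (h i) j" for i j
  have "T x y = (\<Sum>i<card E. \<Prod>j<k. (a i j * x j + b i j * y j) ^ ds j)" for x y
  proof -
    have "T x y = (\<Sum>i<card E. c (h i) * (\<Prod>j<k. (A (h i) j * x j + B (h i) j * y j) ^ ds j))"
      unfolding T by (rule sum.reindex_bij_betw[OF h, symmetric])
    also have "\<dots> = (\<Sum>i<card E. \<Prod>j<k. (a i j * x j + b i j * y j) ^ ds j)"
    proof (rule sum.cong[OF refl])
      fix i
      have "a i 0 * x 0 + b i 0 * y 0 = r (h i) * (A (h i) 0 * x 0 + B (h i) 0 * y 0)"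
        by (simp add: a_def b_def algebra_simps)
      then show "c (h i) * (\<Prod>j<k. (A (h i) j * x j + B (h i) j * y j) ^ ds j) =
          (\<Prod>j<k. (a i j * x j + b i j * y j) ^ ds j)"
        unfolding k' prod.lessThan_Suc_shift by (simp add: a_def b_def r[symmetric] power_mult_distrib)
    qed
    finally show ?thesis .
  qed
  then show ?thesis unfolding ps_rank_def by (intro Least_le) blast
qed

lemma cis_root_unity_power_eq_1_iff:
  fixes N e :: nat
  assumes "N > 0"
  shows "cis (2 * pi / N) ^ e = 1 \<longleftrightarrow> N dvd e"
proof -
  have pow: "cis (2 * pi / N) ^ m = cis (2 * pi * real m / real N)" for m
    by (simp add: DeMoivre mult_ac)
  have "cis (2 * pi / N) ^ N = 1"
    using assms by (simp add: pow)
  then have "cis (2 * pi / N) ^ e = cis (2 * pi / N) ^ (e mod N)"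
    by (metis div_mult_mod_eq mult.commute power_add power_mult power_one mult_1)
  then have "cis (2 * pi / N) ^ e = 1 \<longleftrightarrow>
      cis (2 * pi * real (e mod N) / real N) = cis (2 * pi * real 0 / real N)"
    by (simp add: pow)
  also have "\<dots> \<longleftrightarrow> e mod N = 0"
    using inj_onD[OF bij_betw_imp_inj_on[OF bij_betw_roots_unity[OF assms]], of "e mod N" 0] assms
    by auto
  finally show ?thesis by (simp add: dvd_eq_mod_eq_0)
qed

lemma sum_cis_root_unity_powers:
  fixes N e :: nat
  assumes "N > 0"
  shows "(\<Sum>i<N. (cis (2 * pi / N) ^ e) ^ i) = (if N dvd e then of_nat N else 0)"
proof (cases "N dvd e")
  case True
  then have "cis (2 * pi / N) ^ e = 1" using cis_root_unity_power_eq_1_iff[OF assms] by blast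
  then show ?thesis using True by simp
next
  case False
  then have "cis (2 * pi / N) ^ e \<noteq> 1" using cis_root_unity_power_eq_1_iff[OF assms] by simp
  moreover have "(cis (2 * pi / N) ^ e) ^ N = 1"
    using cis_root_unity_power_eq_1_iff[OF assms, of "e * N"] by (simp add: power_mult)
  ultimately show ?thesis using False by (simp add: geometric_sum)
qed

lemma sum_cis_root_unity_poly_coeff:
  fixes p :: "complex poly" and N k :: nat
  assumes "N > 0" and "k < N" and "degree p < N + k"
  defines "\<omega> \<equiv> cis (2 * pi / N)"
  shows "(\<Sum>i<N. (\<omega> ^ i) ^ (N - k) * poly p (\<omega> ^ i)) = of_nat N * coeff p k"
proof -
  have root_sum: "(\<Sum>i<N. (\<omega> ^ (N - k + m)) ^ i) = (if m = k then of_nat N else 0)"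
    if "m < N + k" for m
  proof -
    have "N dvd N - k + m \<longleftrightarrow> m = k"
    proof
      assume "N dvd N - k + m"
      then obtain q where q: "N - k + m = N * q" by blast
      with \<open>k < N\<close> \<open>m < N + k\<close> have "0 < N * q" "N * q < N * 2" by linarith+
      then have "q = 1" by simp
      then show "m = k" using q \<open>k < N\<close> by simp
    qed (use \<open>k < N\<close> in simp)
    then show ?thesis unfolding \<omega>_def using sum_cis_root_unity_powers[OF \<open>N > 0\<close>] by simp
  qed
  have poly_p: "poly p z = (\<Sum>m<N+k. coeff p m * z ^ m)" for z
    unfolding poly_altdef using \<open>degree p < N + k\<close>
    by (intro sum.mono_neutral_left) (auto simp: coeff_eq_0)
  have "(\<Sum>i<N. (\<omega> ^ i) ^ (N - k) * poly p (\<omega> ^ i))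
      = (\<Sum>m<N+k. coeff p m * (\<Sum>i<N. (\<omega> ^ (N - k + m)) ^ i))"
    unfolding poly_p sum_distrib_left
  proof (subst sum.swap, intro sum.cong refl)
    fix i m
    have "(\<omega> ^ i) ^ (N - k) * (\<omega> ^ i) ^ m = (\<omega> ^ (N - k + m)) ^ i"
      by (metis power_add power_mult mult.commute)
    then show "(\<omega> ^ i) ^ (N - k) * (coeff p m * (\<omega> ^ i) ^ m) = coeff p m * (\<omega> ^ (N - k + m)) ^ i"
      by (simp add: mult_ac)
  qed
  also have "\<dots> = (\<Sum>m<N+k. if m = k then of_nat N * coeff p k else 0)"
    using root_sum by (intro sum.cong) auto
  also have "\<dots> = of_nat N * coeff p k" using \<open>k < N\<close> by simp
  finally show ?thesis .
qed

lemma coeff_mult_shifted: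
  fixes p q :: "'a::comm_semiring_1 poly"
  assumes "\<And>i. i < c \<Longrightarrow> coeff q i = 0"
  shows "coeff (p * q) (c + n) = (\<Sum>i\<le>n. coeff p i * coeff q (c + n - i))"
  unfolding coeff_mult
proof (intro sum.mono_neutral_right ballI)
  fix i assume "i \<in> {..c + n} - {..n}"
  then have "c + n - i < c" by auto
  then show "coeff p i * coeff q (c + n - i) = 0" using assms by simp
qed auto

lemma coeff_mult_eq_0_below:
  fixes p q :: "'a::comm_semiring_1 poly"
  assumes "\<And>i. i < c \<Longrightarrow> coeff q i = 0" and "n < c"
  shows "coeff (p * q) n = 0"
  unfolding coeff_mult using assms by (intro sum.neutral) auto

lemma coeff_power_1:
  fixes p :: "'a::comm_semiring_1 poly"
  shows "coeff (p ^ n) 1 = of_nat n * coeff p 0 ^ (n - 1) * coeff p 1"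
proof (induction n)
  case (Suc n)
  have "coeff (p ^ Suc n) 1 = coeff p 0 * coeff (p ^ n) 1 + coeff p 1 * coeff (p ^ n) 0"
    using coeff_mult_shifted[of 0 "p ^ n" p 1] by (simp add: atMost_Suc add.commute)
  then show ?case unfolding Suc.IH coeff_0_power by (cases n) (simp_all add: algebra_simps)
qed simp

lemma coeff_prod_lowest:
  fixes g :: "'b \<Rightarrow> 'a::comm_semiring_1 poly"
  assumes "finite S" and "\<And>j. j \<in> S \<Longrightarrow> coeff (g j) 0 = 0 \<and> coeff (g j) 2 = 0"
  shows "(\<forall>i<card S. coeff (\<Prod>j\<in>S. g j) i = 0) \<and>
    coeff (\<Prod>j\<in>S. g j) (card S) = (\<Prod>j\<in>S. coeff (g j) 1) \<and>
    coeff (\<Prod>j\<in>S. g j) (Suc (card S)) = 0"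
  using assms
proof (induction S rule: finite_induct)
  case (insert a S)
  let ?G = "\<Prod>j\<in>S. g j"
  have low: "\<And>i. i < card S \<Longrightarrow> coeff ?G i = 0" and
    lowest: "coeff ?G (card S) = (\<Prod>j\<in>S. coeff (g j) 1)" and
    above: "coeff ?G (Suc (card S)) = 0" and
    ga: "coeff (g a) 0 = 0" "coeff (g a) 2 = 0"
    using insert by auto
  have "coeff (g a * ?G) (card S + n) = (\<Sum>i\<le>n. coeff (g a) i * coeff ?G (card S + n - i))" for n
    by (rule coeff_mult_shifted[OF low])
  from this[of 0] this[of 1] this[of 2]
  have "coeff (g a * ?G) (card S) = 0"
    "coeff (g a * ?G) (Suc (card S)) = coeff (g a) 1 * coeff ?G (card S)"
    "coeff (g a * ?G) (Suc (Suc (card S))) = 0"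
    using ga above by (simp_all add: atMost_Suc numeral_2_eq_2)
  moreover have "\<forall>i<card S. coeff (g a * ?G) i = 0"
    using coeff_mult_eq_0_below[OF low] by blast
  ultimately show ?case using insert.hyps lowest by (auto simp: less_Suc_eq)
qed simp

lemma prod_diff_eq_sum_Pow:
  fixes a b :: "'b \<Rightarrow> 'a::comm_ring_1"
  assumes "finite S"
  shows "(\<Prod>j\<in>S. a j - b j) =
    (\<Sum>B\<in>Pow S. (-1) ^ card (S - B) * (\<Prod>j\<in>S. if j \<in> B then a j else b j))"
proof -
  have "(\<Prod>j\<in>S. a j - b j) = (\<Sum>B\<in>Pow S. (\<Prod>j\<in>B. a j) * (\<Prod>j\<in>S - B. - b j))"
    using prod_add[OF assms, of a "\<lambda>j. - b j"] by simp
  also have "\<dots> = (\<Sum>B\<in>Pow S. (-1) ^ card (S - B) * (\<Prod>j\<in>S. if j \<in> B then a j else b j))"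
  proof (intro sum.cong refl)
    fix B assume "B \<in> Pow S"
    then have "S \<inter> {j. j \<in> B} = B" and "S \<inter> - {j. j \<in> B} = S - B" by auto
    then show "(\<Prod>j\<in>B. a j) * (\<Prod>j\<in>S - B. - b j) =
        (-1) ^ card (S - B) * (\<Prod>j\<in>S. if j \<in> B then a j else b j)"
      by (simp add: prod.If_cases[OF assms] prod_uminus mult_ac)
  qed
  finally show ?thesis .
qed

lemma coeff_minus_pcompose_neg:
  fixes p :: "'a::comm_ring_1 poly"
  shows "coeff (p - p \<circ>\<^sub>p [:0, -1:]) m = (1 - (-1) ^ m) * coeff p m"
  by (simp add: coeff_pcompose_linear algebra_simps)

lemma coeff_mult_prod_minus_pcompose_neg:
  fixes P :: "'b \<Rightarrow> 'a::comm_ring_1 poly"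
  assumes "finite S"
  shows "coeff (P0 * (\<Prod>j\<in>S. P j - P j \<circ>\<^sub>p [:0, -1:])) (Suc (card S)) =
    coeff P0 1 * (\<Prod>j\<in>S. 2 * coeff (P j) 1)"
proof -
  let ?G = "\<Prod>j\<in>S. P j - P j \<circ>\<^sub>p [:0, -1:]"
  have "\<forall>i<card S. coeff ?G i = 0" and lowest: "coeff ?G (card S) = (\<Prod>j\<in>S. 2 * coeff (P j) 1)"
    and above: "coeff ?G (Suc (card S)) = 0"
    using coeff_prod_lowest[OF assms, of "\<lambda>j. P j - P j \<circ>\<^sub>p [:0, -1:]"]
    by (simp_all add: coeff_minus_pcompose_neg del: coeff_diff)
  then have "coeff (P0 * ?G) (card S + 1) = (\<Sum>i\<le>1. coeff P0 i * coeff ?G (card S + 1 - i))"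
    by (intro coeff_mult_shifted) auto
  then show ?thesis using lowest above by simp
qed

lemma W_pow_eq_root_unity_sum:
  fixes k d :: nat
  assumes "0 < k" and "2 \<le> d"
  defines "\<omega> \<equiv> cis (2 * pi / (k * d))" and "S \<equiv> {1..<k}"
    and "\<sigma> \<equiv> \<lambda>B j. if j = 0 \<or> j \<in> B then 1 else - 1 :: complex"
  shows "W_pow k d x y = (\<Sum>B\<in>Pow S. \<Sum>i<k * d.
      (-1) ^ card (S - B) * (\<omega> ^ i) ^ (k * d - k) / (k * d * d * (2 * d) ^ (k - 1)) *
      (\<Prod>j<k. (x j + \<sigma> B j * \<omega> ^ i * y j) ^ d))"
proof -
  define N where "N = k * d"
  define P where "P j = [:x j, y j:] ^ d" for j
  define q where "q = P 0 * (\<Prod>j\<in>S. P j - P j \<circ>\<^sub>p [:0, -1:])"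
  have "finite S" and card_S: "card S = k - 1" and "0 \<notin> S" unfolding S_def by auto
  have split_0: "(\<Prod>j<k. f j) = f 0 * (\<Prod>j\<in>S. f j)" for f :: "nat \<Rightarrow> complex"
  proof -
    have "{..<k} = insert 0 S" unfolding S_def using \<open>0 < k\<close> by auto
    then show ?thesis using \<open>finite S\<close> \<open>0 \<notin> S\<close> by simp
  qed
  have poly_q: "poly q t = (\<Sum>B\<in>Pow S. (-1) ^ card (S - B) * (\<Prod>j<k. (x j + \<sigma> B j * t * y j) ^ d))"
    for t
  proof -
    have "poly q t = (x 0 + t * y 0) ^ d * (\<Prod>j\<in>S. (x j + t * y j) ^ d - (x j - t * y j) ^ d)"
      unfolding q_def P_def by (simp add: poly_prod poly_pcompose algebra_simps)
    also have "\<dots> = (\<Sum>B\<in>Pow S. (-1) ^ card (S - B) * ((x 0 + t * y 0) ^ d *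
        (\<Prod>j\<in>S. if j \<in> B then (x j + t * y j) ^ d else (x j - t * y j) ^ d)))"
      by (simp add: prod_diff_eq_sum_Pow[OF \<open>finite S\<close>] sum_distrib_left mult_ac)
    also have "\<dots> = (\<Sum>B\<in>Pow S. (-1) ^ card (S - B) * (\<Prod>j<k. (x j + \<sigma> B j * t * y j) ^ d))"
      unfolding split_0 using \<open>0 \<notin> S\<close>
      by (intro sum.cong prod.cong refl arg_cong2[where f = "(*)"]) (auto simp: \<sigma>_def)
    finally show ?thesis .
  qed
  have "degree q \<le> d + card S * d"
  proof -
    have deg_P: "degree (P j) \<le> d" for j
    proof -
      have "degree (P j) \<le> degree [:x j, y j:] * d" unfolding P_def by (rule degree_power_le)
      also have "\<dots> \<le> 1 * d" by (intro mult_right_mono) simp_all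
      finally show ?thesis by simp
    qed
    then have "degree (P j - P j \<circ>\<^sub>p [:0, -1:]) \<le> d" for j
      by (intro degree_diff_le) (simp_all add: degree_pcompose)
    then have "degree (\<Prod>j\<in>S. P j - P j \<circ>\<^sub>p [:0, -1:]) \<le> card S * d"
      using degree_prod_sum_le[OF \<open>finite S\<close>, of "\<lambda>j. P j - P j \<circ>\<^sub>p [:0, -1:]"]
        sum_bounded_above[of S "\<lambda>j. degree (P j - P j \<circ>\<^sub>p [:0, -1:])" d]
      by (simp add: o_def)
    then show ?thesis
      unfolding q_def using deg_P[of 0] by (intro order_trans[OF degree_mult_le] add_mono)
  qed
  then have deg_q: "degree q < N + k"
    using \<open>0 < k\<close> unfolding card_S N_def by (cases k) auto
  have coeff_P: "coeff (P j) 1 = of_nat d * x j ^ (d - 1) * y j" for j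
    unfolding P_def coeff_power_1 by simp
  have "coeff q k = of_nat d * (2 * of_nat d) ^ (k - 1) * W_pow k d x y"
    using coeff_mult_prod_minus_pcompose_neg[OF \<open>finite S\<close>, of "P 0" P] \<open>0 < k\<close>
    unfolding q_def W_pow_def split_0 card_S coeff_P
    by (simp add: prod.distrib \<open>finite S\<close> card_S mult_ac)
  moreover have "(\<Sum>i<N. (\<omega> ^ i) ^ (N - k) * poly q (\<omega> ^ i)) = of_nat N * coeff q k"
    unfolding \<omega>_def N_def using \<open>0 < k\<close> \<open>2 \<le> d\<close> deg_q
    by (intro sum_cis_root_unity_poly_coeff) (auto simp: N_def)
  ultimately have "W_pow k d x y =
      (\<Sum>i<N. (\<omega> ^ i) ^ (N - k) * poly q (\<omega> ^ i)) / (N * d * (2 * d) ^ (k - 1))"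
    using \<open>0 < k\<close> \<open>2 \<le> d\<close> by (simp add: N_def)
  then show ?thesis
    unfolding poly_q sum_distrib_left sum_divide_distrib N_def
    by (subst sum.swap) (simp add: mult_ac)
qed

theorem corollary3p7:
  fixes k d :: nat
  assumes "k \<ge> 2" and "d \<ge> 3"
  shows "ps_rank k (\<lambda>_. d) (W_pow k d) \<le> 2 ^ (k - 1) * k * d"
proof -
  define S where "S = {1..<k}"
  define \<omega> where "\<omega> = cis (2 * pi / (k * d))"
  define \<sigma> :: "nat set \<Rightarrow> nat \<Rightarrow> complex"
    where "\<sigma> B j = (if j = 0 \<or> j \<in> B then 1 else - 1)" for B j
  define c where "c = (\<lambda>(B, i).
    (-1) ^ card (S - B) * (\<omega> ^ i) ^ (k * d - k) / (k * d * d * (2 * d) ^ (k - 1)))"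
  have "W_pow k d x y = (\<Sum>(B, i)\<in>Pow S \<times> {..<k * d}.
      c (B, i) * (\<Prod>j<k. (1 * x j + \<sigma> B j * \<omega> ^ i * y j) ^ d))" for x y
    using W_pow_eq_root_unity_sum[of k d x y] assms
    unfolding S_def \<omega>_def \<sigma>_def c_def by (simp add: sum.cartesian_product)
  then have "ps_rank k (\<lambda>_. d) (W_pow k d) \<le> card (Pow S \<times> {..<k * d})"
    using assms by (intro ps_rank_le_card[where A = "\<lambda>_ _. 1"]) (auto simp: S_def split_beta)
  then show ?thesis by (simp add: S_def card_cartesian_product card_Pow mult_ac)
qed

end
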